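(* Let $\epsilon\in(0,3/4]$, let $\mathcal{Y}=\sum_{k=1}^r\alpha_k\bigcirc_{\ell=1}^d\mathbf{y}^{(\ell)}_k\in\mathbb{C}^{n_1\times\cdots\times n_d}$ be a rank-$r$ tensor in standard form, and for each $j\in[d]$ let $\mathbf{A}_j\in\mathbb{C}^{m_j\times n_j}$ be an $(\epsilon/4d)$-JL embedding into $\mathbb{C}^{m_j}$ of the $2r^2-r$ vectors $$\mathcal{S}'_j:=\Big(\bigcup_{1\le h<k\le r}\{\mathbf{y}^{(j)}_k-\mathbf{y}^{(j)}_h,\ \mathbf{y}^{(j)}_k+\mathbf{y}^{(j)}_h,\ \mathbf{y}^{(j)}_k-\mathrm{i}\,\mathbf{y}^{(j)}_h,\ \mathbf{y}^{(j)}_k+\mathrm{i}\,\mathbf{y}^{(j)}_h\}\Big)\cup\{\mathbf{y}^{(j)}_k\}_{k\in[r]}\subset\mathbb{C}^{n_j}.$$ Then $$\big|\|\mathcal{Y}\|^2-\|\mathcal{Y}\times_1\mathbf{A}_1\cdots\times_d\mathbf{A}_d\|^2\big|\le\epsilon\Big(e+e^2\sqrt{r(r-1)}\max\big(\epsilon^{d-1},\mu_{\mathcal{Y}}^{d-1}\big)\Big)\|\boldsymbol\alpha\|_2^2\le\epsilon e^2(r+1)\|\boldsymbol\alpha\|_2^2 .$$ Furthermore, if $\mu_{\mathcal{Y}}=0$ then $$\big|\|\mathcal{Y}\|^2-\|\mathcal{Y}\times_1\mathbf{A}_1\cdots\times_d\mathbf{A}_d\|^2\big|\le\big(\epsilon+e\sqrt{r(r-1)}\,\epsilon^d\big)e\,\|\boldsymbol\alpha\|_2^2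 .$$
   Context: Tensors in $\mathbb{C}^{n_1\times\cdots\times n_d}$ have inner product $\langle\mathcal{X},\mathcal{Y}\rangle=\sum\mathcal{X}_{i_1\dots i_d}\overline{\mathcal{Y}_{i_1\dots i_d}}$ and norm $\|\cdot\|$; $\bigcirc$ is the outer product; the $j$-mode product is $(\mathcal{X}\times_j\mathbf{U})_{i_1,\dots,\ell,\dots,i_d}=\sum_{i_j}\mathcal{X}_{i_1,\dots,i_j,\dots,i_d}\mathbf{U}_{\ell,i_j}$; $\mathrm{i}$ is the imaginary unit and $e$ Euler's number. A matrix $\mathbf{A}$ is an $\epsilon$-JL embedding of a set $S$ if $\|\mathbf{A}x\|_2^2=(1+\epsilon_x)\|x\|_2^2$ with $\epsilon_x\in(-\epsilon,\epsilon)$ for all $x\in S$. Standard form: $\|\mathbf{y}^{(\ell)}_k\|_2=1$ for all $\ell,k$; $\boldsymbol\alpha=(\alpha_k)_{k\in[r]}$. The maximum modewise coherence (relative to this representation) is $\mu_{\mathcal{Y}}=\max_{\ell\in[d]}\max_{k\ne h}|\langle\mathbf{y}^{(\ell)}_k,\mathbf{y}^{(\ell)}_h\rangle|$. *)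

theory Defs
  imports Complex_Main "HOL-Library.FuncSet"
begin

text \<open>Vectors in C^n are functions nat => complex, only entries i < n matter.
  Matrices in C^(m x n) are functions nat => nat => complex (row, column).
  Tensors in C^(n_1 x ... x n_d) are functions from multi-indices (nat => nat)
  to complex; the valid multi-indices are PiE {..<d} (%l. {..<n l}).\<close>

definition vinner :: "nat \<Rightarrow> (nat \<Rightarrow> complex) \<Rightarrow> (nat \<Rightarrow> complex) \<Rightarrow> complex" where
  "vinner n x y = (\<Sum>i<n. x i * cnj (y i))"

definition vnorm2 :: "nat \<Rightarrow> (nat \<Rightarrow> complex) \<Rightarrow> real" where
  "vnorm2 n x = (\<Sum>i<n. (cmod (x i))\<^sup>2)"

definition matvec :: "nat \<Rightarrow> (nat \<Rightarrow> nat \<Rightarrow> complex) \<Rightarrow> (nat \<Rightarrow> complex) \<Rightarrow> (nat \<Rightarrow> complex)" where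
  "matvec n A x = (\<lambda>l. \<Sum>i<n. A l i * x i)"

definition JL_embedding ::
  "real \<Rightarrow> nat \<Rightarrow> nat \<Rightarrow> (nat \<Rightarrow> nat \<Rightarrow> complex) \<Rightarrow> (nat \<Rightarrow> complex) set \<Rightarrow> bool" where
  "JL_embedding eps m n A S \<longleftrightarrow>
     (\<forall>x\<in>S. \<exists>ex. -eps < ex \<and> ex < eps \<and> vnorm2 m (matvec n A x) = (1 + ex) * vnorm2 n x)"

definition tindices :: "nat \<Rightarrow> (nat \<Rightarrow> nat) \<Rightarrow> (nat \<Rightarrow> nat) set" where
  "tindices d n = PiE {..<d} (\<lambda>l. {..<n l})"

definition tnorm2 :: "nat \<Rightarrow> (nat \<Rightarrow> nat) \<Rightarrow> ((nat \<Rightarrow> nat) \<Rightarrow> complex) \<Rightarrow> real" where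
  "tnorm2 d n X = (\<Sum>i\<in>tindices d n. (cmod (X i))\<^sup>2)"

definition mode_prod ::
  "((nat \<Rightarrow> nat) \<Rightarrow> complex) \<Rightarrow> nat \<Rightarrow> nat \<Rightarrow> (nat \<Rightarrow> nat \<Rightarrow> complex) \<Rightarrow> ((nat \<Rightarrow> nat) \<Rightarrow> complex)" where
  "mode_prod X j nj U = (\<lambda>i. \<Sum>t<nj. X (i(j := t)) * U (i j) t)"

text \<open>multi_mode_prod j n A X = X x_1 A_1 ... x_j A_j (modes indexed from 0).\<close>
fun multi_mode_prod ::
  "nat \<Rightarrow> (nat \<Rightarrow> nat) \<Rightarrow> (nat \<Rightarrow> nat \<Rightarrow> nat \<Rightarrow> complex) \<Rightarrow> ((nat \<Rightarrow> nat) \<Rightarrow> complex) \<Rightarrow> ((nat \<Rightarrow> nat) \<Rightarrow> complex)" where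
  "multi_mode_prod 0 n A X = X"
| "multi_mode_prod (Suc j) n A X = mode_prod (multi_mode_prod j n A X) j (n j) (A j)"

definition cp_tensor ::
  "nat \<Rightarrow> nat \<Rightarrow> (nat \<Rightarrow> complex) \<Rightarrow> (nat \<Rightarrow> nat \<Rightarrow> nat \<Rightarrow> complex) \<Rightarrow> ((nat \<Rightarrow> nat) \<Rightarrow> complex)" where
  "cp_tensor d r \<alpha> y = (\<lambda>i. \<Sum>k<r. \<alpha> k * (\<Prod>l<d. y l k (i l)))"

text \<open>Maximum modewise coherence (0 if there is no pair k ~= h).\<close>
definition coherence :: "nat \<Rightarrow> (nat \<Rightarrow> nat) \<Rightarrow> nat \<Rightarrow> (nat \<Rightarrow> nat \<Rightarrow> nat \<Rightarrow> complex) \<Rightarrow> real" where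
  "coherence d n r y = Max (insert 0
     {cmod (vinner (n l) (y l k) (y l h)) | l k h. l < d \<and> k < r \<and> h < r \<and> k \<noteq> h})"

definition S_prime :: "nat \<Rightarrow> (nat \<Rightarrow> nat \<Rightarrow> nat \<Rightarrow> complex) \<Rightarrow> nat \<Rightarrow> (nat \<Rightarrow> complex) set" where
  "S_prime r y j =
     (\<Union>k<r. \<Union>h<k. {\<lambda>i. y j k i - y j h i, \<lambda>i. y j k i + y j h i,
                     \<lambda>i. y j k i - \<i> * y j h i, \<lambda>i. y j k i + \<i> * y j h i})
     \<union> {y j k | k. k < r}"

end

theory Submission
  imports Defs
begin

text \<open>Both squared norms expand as sums over pairs (k, h) of alpha_k conj(alpha_h) times the
  product over the modes l of the factor inner products <y_k^(l), y_h^(l)>; for the compressed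
  tensor the factors are A_l y_k^(l). By polarization, a delta-JL embedding of y_k +- y_h and
  y_k +- i y_h moves each factor inner product by at most 2 delta = eps/(2d). A product of d
  factors bounded by B, each moved by at most c, moves by at most d c (B + c)^(d-1), where B = 1
  for the r diagonal terms and B = mu for the r(r-1) others. Summing with AM-GM yields the
  factor ||alpha||^2, and (1 + x/d)^(d-1) <= e^x turns the constants into the stated ones.\<close>

lemma vinner_self: "vinner n x x = complex_of_real (vnorm2 n x)"
  unfolding vinner_def vnorm2_def of_real_sum complex_norm_square by simp

lemma vinner_commute: "vinner n x y = cnj (vinner n y x)"
  unfolding vinner_def by (simp add: cnj_sum mult.commute)

lemma vnorm2_nonneg: "0 \<le> vnorm2 n x"
  unfolding vnorm2_def by (simp add: sum_nonneg)

lemma vnorm2_add_scaled: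
  "complex_of_real (vnorm2 n (\<lambda>i. u i + t * v i)) =
     vnorm2 n u + t * cnj t * vnorm2 n v + cnj t * vinner n u v + t * cnj (vinner n u v)"
  unfolding vnorm2_def vinner_def of_real_sum complex_norm_square
  by (simp add: sum.distrib sum_distrib_left cnj_sum algebra_simps)

lemma matvec_add_scaled:
  "matvec n A (\<lambda>i. u i + t * v i) = (\<lambda>l. matvec n A u l + t * matvec n A v l)"
  unfolding matvec_def by (simp add: sum.distrib sum_distrib_left algebra_simps)

lemma sum_lessThan_4:
  fixes g :: "nat \<Rightarrow> 'a::comm_monoid_add"
  shows "(\<Sum>q<4. g q) = g 0 + g 1 + g 2 + g 3"
  by (simp add: eval_nat_numeral)

lemma vinner_polarization:
  "4 * vinner n u v = (\<Sum>q<4. \<i> ^ q * complex_of_real (vnorm2 n (\<lambda>i. u i + \<i> ^ q * v i)))"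
  unfolding vnorm2_add_scaled sum_lessThan_4 by (simp add: power3_eq_cube algebra_simps)

lemma sum_vnorm2_rotations:
  "(\<Sum>q<4. vnorm2 n (\<lambda>i. u i + \<i> ^ q * v i)) = 4 * (vnorm2 n u + vnorm2 n v)"
proof -
  have "complex_of_real (\<Sum>q<4. vnorm2 n (\<lambda>i. u i + \<i> ^ q * v i)) =
      complex_of_real (4 * (vnorm2 n u + vnorm2 n v))"
    unfolding sum_lessThan_4 of_real_add vnorm2_add_scaled by (simp add: power3_eq_cube algebra_simps)
  then show ?thesis
    by (simp only: of_real_eq_iff)
qed

lemma norm_vinner_le: "cmod (vinner n x y) \<le> (vnorm2 n x + vnorm2 n y) / 2"
proof -
  have "cmod (vinner n x y) \<le> (\<Sum>i<n. cmod (x i) * cmod (y i))"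
    unfolding vinner_def by (rule order_trans[OF norm_sum]) (simp add: norm_mult)
  also have "\<dots> \<le> (\<Sum>i<n. ((cmod (x i))\<^sup>2 + (cmod (y i))\<^sup>2) / 2)"
  proof (rule sum_mono)
    fix i
    show "cmod (x i) * cmod (y i) \<le> ((cmod (x i))\<^sup>2 + (cmod (y i))\<^sup>2) / 2"
      using sum_squares_bound[of "cmod (x i)" "cmod (y i)"] by simp
  qed
  also have "\<dots> = (vnorm2 n x + vnorm2 n y) / 2"
    unfolding vnorm2_def by (simp add: sum.distrib flip: sum_divide_distrib)
  finally show ?thesis .
qed

lemma JL_embedding_norm_error:
  assumes "JL_embedding \<delta> m n A S" and "x \<in> S"
  shows "\<bar>vnorm2 m (matvec n A x) - vnorm2 n x\<bar> \<le> \<delta> * vnorm2 n x"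
proof -
  obtain e where "-\<delta> < e" "e < \<delta>" "vnorm2 m (matvec n A x) = (1 + e) * vnorm2 n x"
    using assms unfolding JL_embedding_def by blast
  then show ?thesis
    by (simp add: algebra_simps abs_mult vnorm2_nonneg mult_right_mono)
qed

lemma JL_embedding_inner_error:
  assumes JL: "JL_embedding \<delta> m n A S"
    and rotations: "\<And>q. q < 4 \<Longrightarrow> (\<lambda>i. u i + \<i> ^ q * v i) \<in> S"
    and "vnorm2 n u = 1" and "vnorm2 n v = 1"
  shows "cmod (vinner m (matvec n A u) (matvec n A v) - vinner n u v) \<le> 2 * \<delta>"
proof -
  let ?w = "\<lambda>q i. u i + \<i> ^ q * v i"
  let ?err = "\<lambda>q. vnorm2 m (matvec n A (?w q)) - vnorm2 n (?w q)"
  have polarized: "4 * (vinner m (matvec n A u) (matvec n A v) - vinner n u v) =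
      (\<Sum>q<4. \<i> ^ q * complex_of_real (?err q))"
    by (simp add: vinner_polarization matvec_add_scaled right_diff_distrib sum_subtractf)
  have "4 * cmod (vinner m (matvec n A u) (matvec n A v) - vinner n u v)
      = cmod (4 * (vinner m (matvec n A u) (matvec n A v) - vinner n u v))"
    by (simp only: norm_mult norm_numeral)
  also have "\<dots> = cmod (\<Sum>q<4. \<i> ^ q * complex_of_real (?err q))"
    by (simp only: polarized)
  also have "\<dots> \<le> (\<Sum>q<4. \<bar>?err q\<bar>)"
    by (rule order_trans[OF norm_sum]) (simp add: norm_mult norm_power del: of_real_diff)
  also have "\<dots> \<le> (\<Sum>q<4. \<delta> * vnorm2 n (?w q))"
    using JL_embedding_norm_error[OF JL rotations] by (intro sum_mono) simp
  also have "\<dots> = 8 * \<delta>"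
    using assms(3,4) by (simp flip: sum_distrib_left add: sum_vnorm2_rotations)
  finally show ?thesis by simp
qed

lemma rotations_in_S_prime:
  assumes "h < k" "k < r" "q < 4"
  shows "(\<lambda>i. y j k i + \<i> ^ q * y j h i) \<in> S_prime r y j"
proof -
  have "q \<in> {0, 1, 2, 3}" using assms(3) by auto
  then have "(\<lambda>i. y j k i + \<i> ^ q * y j h i) \<in> {\<lambda>i. y j k i - y j h i, \<lambda>i. y j k i + y j h i,
      \<lambda>i. y j k i - \<i> * y j h i, \<lambda>i. y j k i + \<i> * y j h i}"
    by (auto simp: numeral_eq_Suc)
  then show ?thesis
    using assms(1,2) unfolding S_prime_def by blast
qed

lemma factor_in_S_prime: "k < r \<Longrightarrow> y j k \<in> S_prime r y j"
  unfolding S_prime_def by blast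

lemma S_prime_JL_inner_error:
  assumes JL: "JL_embedding \<delta> m n A (S_prime r y j)"
    and unit: "\<And>k. k < r \<Longrightarrow> vnorm2 n (y j k) = 1"
    and "k < r" "h < r"
  shows "cmod (vinner m (matvec n A (y j k)) (matvec n A (y j h)) - vinner n (y j k) (y j h)) \<le> 2 * \<delta>"
proof -
  have off_diagonal: "cmod (vinner m (matvec n A (y j k)) (matvec n A (y j h)) - vinner n (y j k) (y j h)) \<le> 2 * \<delta>"
    if "h < k" "k < r" for k h
    using that by (intro JL_embedding_inner_error[OF JL] rotations_in_S_prime unit) auto
  consider "h < k" | "k < h" | "k = h" by linarith
  then show ?thesis
  proof cases
    case 1
    then show ?thesis using off_diagonal \<open>k < r\<close> by blast
  next
    case 2
    then show ?thesis
      using off_diagonal[of k h] \<open>h < r\<close>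
      by (metis complex_cnj_diff complex_mod_cnj vinner_commute)
  next
    case 3
    have "\<bar>vnorm2 m (matvec n A (y j k)) - vnorm2 n (y j k)\<bar> \<le> \<delta>"
      using JL_embedding_norm_error[OF JL factor_in_S_prime] unit \<open>k < r\<close> by simp
    then show ?thesis
      using 3 by (simp add: vinner_self flip: of_real_diff)
  qed
qed

lemma finite_coherence_set:
  fixes n :: "nat \<Rightarrow> nat" and y :: "nat \<Rightarrow> nat \<Rightarrow> nat \<Rightarrow> complex"
  shows "finite {cmod (vinner (n l) (y l k) (y l h)) | l k h. l < d \<and> k < r \<and> h < r \<and> k \<noteq> h}"
proof -
  have "{cmod (vinner (n l) (y l k) (y l h)) | l k h. l < d \<and> k < r \<and> h < r \<and> k \<noteq> h}
      \<subseteq> (\<lambda>(l, k, h). cmod (vinner (n l) (y l k) (y l h))) ` ({..<d} \<times> {..<r} \<times> {..<r})"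
    by (fastforce simp: image_iff)
  then show ?thesis
    by (rule finite_subset) simp
qed

lemma coherence_nonneg: "0 \<le> coherence d n r y"
  unfolding coherence_def using finite_coherence_set by (intro Max_ge) auto

lemma norm_vinner_le_coherence:
  assumes "l < d" "k < r" "h < r" "k \<noteq> h"
  shows "cmod (vinner (n l) (y l k) (y l h)) \<le> coherence d n r y"
  unfolding coherence_def using finite_coherence_set assms by (intro Max_ge) blast+

lemma coherence_le_one:
  assumes "\<And>l k. l < d \<Longrightarrow> k < r \<Longrightarrow> vnorm2 (n l) (y l k) = 1"
  shows "coherence d n r y \<le> 1"
proof -
  have "cmod (vinner (n l) (y l k) (y l h)) \<le> 1" if "l < d" "k < r" "h < r" for l k h
    using norm_vinner_le[of "n l" "y l k" "y l h"] assms that by simp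
  then show ?thesis
    unfolding coherence_def using finite_coherence_set by (intro Max.boundedI) auto
qed

lemma tnorm2_cp_tensor:
  "complex_of_real (tnorm2 d n (cp_tensor d r \<alpha> y)) =
     (\<Sum>k<r. \<Sum>h<r. \<alpha> k * cnj (\<alpha> h) * (\<Prod>l<d. vinner (n l) (y l k) (y l h)))"
proof -
  have "complex_of_real (tnorm2 d n (cp_tensor d r \<alpha> y)) =
      (\<Sum>i\<in>tindices d n. (\<Sum>k<r. \<alpha> k * (\<Prod>l<d. y l k (i l))) * cnj (\<Sum>h<r. \<alpha> h * (\<Prod>l<d. y l h (i l))))"
    unfolding tnorm2_def cp_tensor_def of_real_sum complex_norm_square by simp
  also have "\<dots> = (\<Sum>i\<in>tindices d n. \<Sum>k<r. \<Sum>h<r.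
      \<alpha> k * cnj (\<alpha> h) * (\<Prod>l<d. y l k (i l) * cnj (y l h (i l))))"
    by (simp only: cnj_sum sum_product) (simp add: cnj_prod prod.distrib mult_ac)
  also have "\<dots> = (\<Sum>k<r. \<Sum>h<r. \<alpha> k * cnj (\<alpha> h) *
      (\<Sum>i\<in>tindices d n. \<Prod>l<d. y l k (i l) * cnj (y l h (i l))))"
    by (simp add: sum_distrib_left sum.swap[of _ "tindices d n"])
  also have "\<dots> = (\<Sum>k<r. \<Sum>h<r. \<alpha> k * cnj (\<alpha> h) * (\<Prod>l<d. vinner (n l) (y l k) (y l h)))"
    unfolding tindices_def vinner_def by (simp add: prod_sum_PiE)
  finally show ?thesis .
qed

lemma mode_prod_cp_tensor:
  assumes "j < d"
  shows "mode_prod (cp_tensor d r \<alpha> y) j (n j) U =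
    cp_tensor d r \<alpha> (y(j := \<lambda>k. matvec (n j) U (y j k)))"
proof
  fix i
  let ?y' = "y(j := \<lambda>k. matvec (n j) U (y j k))"
  let ?rest = "\<lambda>k. \<Prod>l\<in>{..<d} - {j}. y l k (i l)"
  have factor: "(\<Prod>l<d. f l) = f j * (\<Prod>l\<in>{..<d} - {j}. f l)" for f :: "nat \<Rightarrow> complex"
    using assms by (simp add: prod.remove)
  have "(\<Prod>l\<in>{..<d} - {j}. y l k ((i(j := t)) l)) = ?rest k" for k t
    by (intro prod.cong) auto
  then have "(\<Prod>l<d. y l k ((i(j := t)) l)) = y j k t * ?rest k" for k t
    unfolding factor by simp
  moreover have "(\<Prod>l\<in>{..<d} - {j}. ?y' l k (i l)) = ?rest k" for k
    by (intro prod.cong) auto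
  then have "(\<Prod>l<d. ?y' l k (i l)) = matvec (n j) U (y j k) (i j) * ?rest k" for k
    unfolding factor by simp
  ultimately show "mode_prod (cp_tensor d r \<alpha> y) j (n j) U i = cp_tensor d r \<alpha> ?y' i"
    unfolding mode_prod_def cp_tensor_def matvec_def
    by (simp add: sum_distrib_left sum_distrib_right mult_ac sum.swap[of _ "{..<n j}"])
qed

lemma multi_mode_prod_cp_tensor:
  "j \<le> d \<Longrightarrow> multi_mode_prod j n A (cp_tensor d r \<alpha> y) =
     cp_tensor d r \<alpha> (\<lambda>l k. if l < j then matvec (n l) (A l) (y l k) else y l k)"
proof (induction j)
  case (Suc j)
  let ?z = "\<lambda>l k. if l < j then matvec (n l) (A l) (y l k) else y l k"
  have "multi_mode_prod (Suc j) n A (cp_tensor d r \<alpha> y) =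
      cp_tensor d r \<alpha> (?z(j := \<lambda>k. matvec (n j) (A j) (y j k)))"
    using Suc by (simp add: mode_prod_cp_tensor)
  also have "?z(j := \<lambda>k. matvec (n j) (A j) (y j k)) =
      (\<lambda>l k. if l < Suc j then matvec (n l) (A l) (y l k) else y l k)"
    by (auto simp: fun_eq_iff)
  finally show ?case .
qed simp

lemma norm_prod_diff_le:
  fixes z w :: "'i \<Rightarrow> 'a::{real_normed_algebra_1, comm_monoid_mult}"
  assumes "finite I" and "0 \<le> M" and "0 \<le> c"
    and "\<And>i. i \<in> I \<Longrightarrow> norm (w i) \<le> M" and "\<And>i. i \<in> I \<Longrightarrow> norm (z i - w i) \<le> c"
  shows "norm (prod z I - prod w I) \<le> real (card I) * c * (M + c) ^ (card I - 1)"
  using assms(1,4,5)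
proof (induction I rule: finite_induct)
  case (insert a F)
  let ?N = "card F"
  have IH: "norm (prod z F - prod w F) \<le> real ?N * c * (M + c) ^ (?N - 1)"
    using insert by auto
  have w_a: "norm (w a) \<le> M" and zw_a: "norm (z a - w a) \<le> c"
    using insert.prems by auto
  have z_a: "norm (z a) \<le> M + c"
    using norm_triangle_ineq[of "z a - w a" "w a"] w_a zw_a by simp
  have "norm (prod w F) \<le> (\<Prod>i\<in>F. norm (w i))"
    by (rule norm_prod_le)
  also have "\<dots> \<le> (\<Prod>i\<in>F. M)"
    using insert.prems by (intro prod_mono) auto
  finally have prod_w: "norm (prod w F) \<le> M ^ ?N"
    by simp
  have "prod z (insert a F) - prod w (insert a F) = (prod z F - prod w F) * z a + prod w F * (z a - w a)"
    using insert.hyps by (simp add: algebra_simps)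
  then have "norm (prod z (insert a F) - prod w (insert a F))
      \<le> norm (prod z F - prod w F) * norm (z a) + norm (prod w F) * norm (z a - w a)"
    by (metis norm_triangle_le norm_mult_ineq add_mono)
  also have "\<dots> \<le> real ?N * c * (M + c) ^ (?N - 1) * (M + c) + M ^ ?N * c"
    using IH z_a prod_w zw_a assms(2,3) by (intro add_mono mult_mono) auto
  also have "\<dots> \<le> real ?N * c * (M + c) ^ ?N + (M + c) ^ ?N * c"
    using assms(2,3)
    by (intro add_mono mult_right_mono power_mono)
      (auto simp: mult.assoc power_Suc2[symmetric] simp del: power_Suc2 split: nat_diff_split)
  also have "\<dots> = real (card (insert a F)) * c * (M + c) ^ (card (insert a F) - 1)"
    using insert.hyps by (simp add: algebra_simps)
  finally show ?case .
qed simp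

lemma square_sum_le_card_mult_sum_squares:
  fixes a :: "nat \<Rightarrow> real"
  shows "(\<Sum>k<r. a k)\<^sup>2 \<le> real r * (\<Sum>k<r. (a k)\<^sup>2)"
proof -
  have "(\<Sum>k<r. a k)\<^sup>2 = (\<Sum>k<r. \<Sum>h<r. a k * a h)"
    by (simp add: power2_eq_square sum_product)
  also have "\<dots> \<le> (\<Sum>k<r. \<Sum>h<r. ((a k)\<^sup>2 + (a h)\<^sup>2) / 2)"
    using sum_squares_bound by (intro sum_mono) (simp add: field_simps)
  also have "\<dots> = real r * (\<Sum>k<r. (a k)\<^sup>2)"
    by (simp add: sum.distrib add_divide_distrib sum_distrib_left sum.swap[of "\<lambda>k h. (a h)\<^sup>2 / 2"]
        flip: sum_divide_distrib)
  finally show ?thesis .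
qed

lemma norm_quadratic_form_le:
  fixes \<alpha> :: "nat \<Rightarrow> complex" and X :: "nat \<Rightarrow> nat \<Rightarrow> complex"
  assumes "0 \<le> E'"
    and diagonal: "\<And>k. k < r \<Longrightarrow> cmod (X k k) \<le> E"
    and off_diagonal: "\<And>k h. k < r \<Longrightarrow> h < r \<Longrightarrow> k \<noteq> h \<Longrightarrow> cmod (X k h) \<le> E'"
  shows "cmod (\<Sum>k<r. \<Sum>h<r. \<alpha> k * cnj (\<alpha> h) * X k h)
    \<le> (E + (real r - 1) * E') * (\<Sum>k<r. (cmod (\<alpha> k))\<^sup>2)"
proof -
  let ?a = "\<lambda>k. cmod (\<alpha> k)"
  let ?S = "\<Sum>k<r. (cmod (\<alpha> k))\<^sup>2"
  have "cmod (\<Sum>k<r. \<Sum>h<r. \<alpha> k * cnj (\<alpha> h) * X k h)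
      \<le> (\<Sum>k<r. \<Sum>h<r. ?a k * ?a h * cmod (X k h))"
    by (rule order_trans[OF norm_sum sum_mono], rule order_trans[OF norm_sum])
      (simp add: norm_mult)
  also have "\<dots> \<le> (\<Sum>k<r. \<Sum>h<r. ?a k * ?a h * (E' + (if k = h then E - E' else 0)))"
    using diagonal off_diagonal by (intro sum_mono mult_left_mono) auto
  also have "\<dots> = E' * (\<Sum>k<r. ?a k)\<^sup>2 + (E - E') * ?S"
    by (simp add: algebra_simps sum.distrib sum_subtractf sum_distrib_left power2_eq_square sum_product
        if_distrib[of "\<lambda>x. _ * x"] cong: if_cong)
  also have "\<dots> \<le> E' * (real r * ?S) + (E - E') * ?S"
    using square_sum_le_card_mult_sum_squares[of ?a r] \<open>0 \<le> E'\<close>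
    by (intro add_right_mono mult_left_mono) auto
  also have "\<dots> = (E + (real r - 1) * E') * ?S"
    by (simp add: algebra_simps)
  finally show ?thesis .
qed

lemma tnorm2_cp_tensor_diff_le:
  fixes y z :: "nat \<Rightarrow> nat \<Rightarrow> nat \<Rightarrow> complex"
  assumes "0 \<le> c" and "0 \<le> M"
    and unit: "\<And>l k. l < d \<Longrightarrow> k < r \<Longrightarrow> vnorm2 (n l) (y l k) = 1"
    and coherent: "\<And>l k h. l < d \<Longrightarrow> k < r \<Longrightarrow> h < r \<Longrightarrow> k \<noteq> h \<Longrightarrow>
      cmod (vinner (n l) (y l k) (y l h)) \<le> M"
    and close: "\<And>l k h. l < d \<Longrightarrow> k < r \<Longrightarrow> h < r \<Longrightarrow>
      cmod (vinner (m l) (z l k) (z l h) - vinner (n l) (y l k) (y l h)) \<le> c"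
  shows "\<bar>tnorm2 d n (cp_tensor d r \<alpha> y) - tnorm2 d m (cp_tensor d r \<alpha> z)\<bar>
    \<le> (real d * c * (1 + c) ^ (d - 1) + (real r - 1) * (real d * c * (M + c) ^ (d - 1)))
        * (\<Sum>k<r. (cmod (\<alpha> k))\<^sup>2)"
proof -
  let ?b = "\<lambda>k h. \<Prod>l<d. vinner (n l) (y l k) (y l h)"
  let ?a = "\<lambda>k h. \<Prod>l<d. vinner (m l) (z l k) (z l h)"
  have product_error: "cmod (?b k h - ?a k h) \<le> real d * c * (B + c) ^ (d - 1)"
    if "k < r" "h < r" "0 \<le> B" "\<And>l. l < d \<Longrightarrow> cmod (vinner (n l) (y l k) (y l h)) \<le> B" for k h B
    using norm_prod_diff_le[where I = "{..<d}" and M = B and c = c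
        and w = "\<lambda>l. vinner (n l) (y l k) (y l h)" and z = "\<lambda>l. vinner (m l) (z l k) (z l h)"]
      that close \<open>0 \<le> c\<close>
    by (simp add: norm_minus_commute)
  have "\<bar>tnorm2 d n (cp_tensor d r \<alpha> y) - tnorm2 d m (cp_tensor d r \<alpha> z)\<bar>
      = cmod (complex_of_real (tnorm2 d n (cp_tensor d r \<alpha> y)) - tnorm2 d m (cp_tensor d r \<alpha> z))"
    by (simp flip: of_real_diff)
  also have "\<dots> = cmod (\<Sum>k<r. \<Sum>h<r. \<alpha> k * cnj (\<alpha> h) * (?b k h - ?a k h))"
    unfolding tnorm2_cp_tensor by (simp add: right_diff_distrib sum_subtractf)
  also have "\<dots> \<le> (real d * c * (1 + c) ^ (d - 1) + (real r - 1) * (real d * c * (M + c) ^ (d - 1)))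
        * (\<Sum>k<r. (cmod (\<alpha> k))\<^sup>2)"
  proof (rule norm_quadratic_form_le)
    show "0 \<le> real d * c * (M + c) ^ (d - 1)"
      using assms(1,2) by simp
    show "cmod (?b k k - ?a k k) \<le> real d * c * (1 + c) ^ (d - 1)" if "k < r" for k
      using that unit by (intro product_error) (simp_all add: vinner_self)
    show "cmod (?b k h - ?a k h) \<le> real d * c * (M + c) ^ (d - 1)" if "k < r" "h < r" "k \<noteq> h" for k h
      using that coherent \<open>0 \<le> M\<close> by (intro product_error) simp_all
  qed
  finally show ?thesis .
qed

lemma tnorm2_multi_mode_prod_diff_le:
  assumes "0 \<le> \<delta>" and "coherence d n r y \<le> M"
    and unit: "\<And>l k. l < d \<Longrightarrow> k < r \<Longrightarrow> vnorm2 (n l) (y l k) = 1"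
    and JL: "\<And>j. j < d \<Longrightarrow> JL_embedding \<delta> (m j) (n j) (A j) (S_prime r y j)"
  shows "\<bar>tnorm2 d n (cp_tensor d r \<alpha> y) - tnorm2 d m (multi_mode_prod d n A (cp_tensor d r \<alpha> y))\<bar>
    \<le> (real d * (2 * \<delta>) * (1 + 2 * \<delta>) ^ (d - 1)
        + (real r - 1) * (real d * (2 * \<delta>) * (M + 2 * \<delta>) ^ (d - 1)))
      * (\<Sum>k<r. (cmod (\<alpha> k))\<^sup>2)"
proof -
  let ?z = "\<lambda>l k. if l < d then matvec (n l) (A l) (y l k) else y l k"
  have "\<bar>tnorm2 d n (cp_tensor d r \<alpha> y) - tnorm2 d m (cp_tensor d r \<alpha> ?z)\<bar>
    \<le> (real d * (2 * \<delta>) * (1 + 2 * \<delta>) ^ (d - 1)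
        + (real r - 1) * (real d * (2 * \<delta>) * (M + 2 * \<delta>) ^ (d - 1)))
      * (\<Sum>k<r. (cmod (\<alpha> k))\<^sup>2)"
  proof (rule tnorm2_cp_tensor_diff_le)
    show "0 \<le> M"
      using coherence_nonneg assms(2) by (rule order_trans)
    show "cmod (vinner (n l) (y l k) (y l h)) \<le> M" if "l < d" "k < r" "h < r" "k \<noteq> h" for l k h
      using norm_vinner_le_coherence[OF that] assms(2) by (rule order_trans)
    show "cmod (vinner (m l) (?z l k) (?z l h) - vinner (n l) (y l k) (y l h)) \<le> 2 * \<delta>"
      if "l < d" "k < r" "h < r" for l k h
      using S_prime_JL_inner_error[OF JL] unit that by simp
  qed (use assms in auto)
  then show ?thesis
    by (simp only: multi_mode_prod_cp_tensor[OF order_refl])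
qed

lemma one_add_divide_power_le_exp:
  fixes x :: real
  assumes "0 \<le> x" and "1 \<le> d"
  shows "(1 + x / real d) ^ (d - 1) \<le> exp x"
proof -
  have "(1 + x / real d) ^ (d - 1) \<le> (1 + x / real d) ^ d"
    using assms by (intro power_increasing) auto
  also have "\<dots> \<le> exp (x / real d) ^ d"
    using assms by (intro power_mono) auto
  also have "\<dots> = exp x"
    using assms by (simp flip: exp_of_nat_mult)
  finally show ?thesis .
qed

lemma add_power_le_exp_mult_power:
  fixes M c x :: real
  assumes "1 \<le> d" and "0 \<le> M" and "0 \<le> c" and "0 \<le> x" and "real d * c \<le> x * M"
  shows "(M + c) ^ (d - 1) \<le> exp x * M ^ (d - 1)"
proof -
  have "M + c \<le> M * (1 + x / real d)"
    using assms by (simp add: field_simps)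
  then have "(M + c) ^ (d - 1) \<le> (M * (1 + x / real d)) ^ (d - 1)"
    using assms by (intro power_mono) auto
  also have "\<dots> = M ^ (d - 1) * (1 + x / real d) ^ (d - 1)"
    by (simp add: power_mult_distrib)
  also have "\<dots> \<le> M ^ (d - 1) * exp x"
    using assms by (intro mult_left_mono one_add_divide_power_le_exp) auto
  finally show ?thesis
    by (simp add: mult.commute)
qed

lemma exp_one_le_exp_one_squared: "exp 1 \<le> (exp 1 :: real)\<^sup>2"
  using mult_left_mono[of 1 "exp 1" "exp (1::real)"] by (simp add: power2_eq_square)

lemma diff_one_le_sqrt_mult_diff_one: "real r - 1 \<le> sqrt (real r * (real r - 1))"
proof (cases "r = 0")
  case False
  then have "(real r - 1)\<^sup>2 \<le> real r * (real r - 1)"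
    by (simp add: power2_eq_square algebra_simps)
  then show ?thesis
    by (rule real_le_rsqrt)
qed simp

lemma sqrt_mult_diff_one_nonneg: "0 \<le> sqrt (real r * (real r - 1))"
  by (cases r) auto

lemma sqrt_mult_diff_one_le: "sqrt (real r * (real r - 1)) \<le> real r"
  by (cases "r = 0") (auto intro: real_le_lsqrt simp: power2_eq_square algebra_simps)

lemma diagonal_error_le:
  assumes "0 \<le> eps" and "eps \<le> 2" and "1 \<le> d"
  shows "eps / 2 * (1 + eps / (2 * real d)) ^ (d - 1) \<le> eps * exp 1"
proof -
  have "(1 + eps / (2 * real d)) ^ (d - 1) \<le> exp (eps / 2)"
    using add_power_le_exp_mult_power[of d 1 "eps / (2 * real d)" "eps / 2"] assms by simp
  also have "\<dots> \<le> 2 * exp 1"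
    using assms exp_gt_zero[of 1] exp_le_cancel_iff[of "eps / 2" 1] by linarith
  finally show ?thesis
    using mult_left_mono[of _ "2 * exp 1" "eps / 2"] assms by simp
qed

lemma off_diagonal_error_le:
  assumes "0 \<le> eps" and "0 \<le> \<mu>" and "1 \<le> d"
  shows "eps / 2 * (max eps \<mu> + eps / (2 * real d)) ^ (d - 1)
    \<le> eps * (exp 1)\<^sup>2 * max (eps ^ (d - 1)) (\<mu> ^ (d - 1))"
proof -
  have "(max eps \<mu> + eps / (2 * real d)) ^ (d - 1) \<le> exp (1 / 2) * max eps \<mu> ^ (d - 1)"
    using assms by (intro add_power_le_exp_mult_power) auto
  also have "\<dots> \<le> 2 * (exp 1)\<^sup>2 * max (eps ^ (d - 1)) (\<mu> ^ (d - 1))"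
  proof (rule mult_mono)
    show "exp (1 / 2) \<le> 2 * (exp 1 :: real)\<^sup>2"
      using exp_le_cancel_iff[of "1 / 2" "1 :: real", THEN iffD2] exp_one_le_exp_one_squared
        zero_le_power2[of "exp 1 :: real"]
      by linarith
    show "max eps \<mu> ^ (d - 1) \<le> max (eps ^ (d - 1)) (\<mu> ^ (d - 1))"
      by (cases "eps \<le> \<mu>") (auto simp: le_max_iff_disj max_def)
  qed (use assms in auto)
  finally have "eps / 2 * (max eps \<mu> + eps / (2 * real d)) ^ (d - 1)
      \<le> eps / 2 * (2 * (exp 1)\<^sup>2 * max (eps ^ (d - 1)) (\<mu> ^ (d - 1)))"
    by (rule mult_left_mono) (use assms in simp)
  then show ?thesis
    by simp
qed

text \<open>The summand \<open>0 +\<close> is the coherence bound \<open>M = 0\<close> of the general off-diagonal error.\<close>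

lemma orthogonal_off_diagonal_error_le:
  assumes "0 \<le> eps" and "1 \<le> d"
  shows "eps / 2 * (0 + eps / (2 * real d)) ^ (d - 1) \<le> (exp 1)\<^sup>2 * eps ^ d"
proof -
  have "eps / 2 * (eps / (2 * real d)) ^ (d - 1) \<le> eps * eps ^ (d - 1)"
  proof (intro mult_mono power_mono)
    show "eps / (2 * real d) \<le> eps"
      using divide_left_mono[of 1 "2 * real d" eps] assms by simp
  qed (use assms in auto)
  also have "\<dots> = eps ^ d"
    using assms by (simp flip: power_Suc)
  also have "\<dots> \<le> (exp 1)\<^sup>2 * eps ^ d"
    using mult_right_mono[of 1 "(exp 1)\<^sup>2" "eps ^ d"] assms by (simp add: one_le_power)
  finally show ?thesis
    by simp
qed

lemma tnorm2_multi_mode_prod_diff_le_exp: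
  assumes "0 < eps" and "eps \<le> 2" and "1 \<le> d" and "coherence d n r y \<le> M"
    and unit: "\<And>l k. l < d \<Longrightarrow> k < r \<Longrightarrow> vnorm2 (n l) (y l k) = 1"
    and JL: "\<And>j. j < d \<Longrightarrow> JL_embedding (eps / (4 * real d)) (m j) (n j) (A j) (S_prime r y j)"
    and off_diagonal: "eps / 2 * (M + eps / (2 * real d)) ^ (d - 1) \<le> E'"
  shows "\<bar>tnorm2 d n (cp_tensor d r \<alpha> y) - tnorm2 d m (multi_mode_prod d n A (cp_tensor d r \<alpha> y))\<bar>
    \<le> (eps * exp 1 + sqrt (real r * (real r - 1)) * E') * (\<Sum>k<r. (cmod (\<alpha> k))\<^sup>2)"
proof -
  let ?c = "eps / (2 * real d)"
  have c: "2 * (eps / (4 * real d)) = ?c" "real d * ?c = eps / 2"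
    using assms(3) by (auto simp: field_simps)
  have "0 \<le> M"
    using coherence_nonneg assms(4) by (rule order_trans)
  have "\<bar>tnorm2 d n (cp_tensor d r \<alpha> y) - tnorm2 d m (multi_mode_prod d n A (cp_tensor d r \<alpha> y))\<bar>
    \<le> (eps / 2 * (1 + ?c) ^ (d - 1) + (real r - 1) * (eps / 2 * (M + ?c) ^ (d - 1)))
      * (\<Sum>k<r. (cmod (\<alpha> k))\<^sup>2)"
    using tnorm2_multi_mode_prod_diff_le[OF _ assms(4) unit JL] assms(1) by (simp only: c) simp
  also have "\<dots> \<le> (eps * exp 1 + sqrt (real r * (real r - 1)) * E') * (\<Sum>k<r. (cmod (\<alpha> k))\<^sup>2)"
  proof (rule mult_right_mono, rule add_mono)
    show "eps / 2 * (1 + ?c) ^ (d - 1) \<le> eps * exp 1"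
      using assms(1-3) by (intro diagonal_error_le) auto
    show "(real r - 1) * (eps / 2 * (M + ?c) ^ (d - 1)) \<le> sqrt (real r * (real r - 1)) * E'"
      using diff_one_le_sqrt_mult_diff_one[of r] sqrt_mult_diff_one_nonneg[of r] off_diagonal
        assms(1) \<open>0 \<le> M\<close>
      by (intro mult_mono) auto
  qed (simp add: sum_nonneg)
  finally show ?thesis .
qed

lemma coherence_bound_le_rank_bound:
  assumes "0 \<le> eps" and "0 \<le> S" and "0 \<le> x" and "x \<le> 1"
  shows "eps * (exp 1 + (exp 1)\<^sup>2 * sqrt (real r * (real r - 1)) * x) * S
    \<le> eps * (exp 1)\<^sup>2 * (real r + 1) * S"
proof -
  let ?s = "sqrt (real r * (real r - 1))"
  have "?s * x \<le> real r"
    using sqrt_mult_diff_one_nonneg[of r] sqrt_mult_diff_one_le[of r] mult_right_le_one_le[of ?s x]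
      assms(3,4)
    by linarith
  then have "(exp 1)\<^sup>2 * (?s * x) \<le> (exp 1)\<^sup>2 * real r"
    by (rule mult_left_mono) simp
  then have "exp 1 + (exp 1)\<^sup>2 * ?s * x \<le> (exp 1)\<^sup>2 * (real r + 1)"
    using exp_one_le_exp_one_squared by (simp only: mult.assoc distrib_left mult_1_right)
  then have "eps * (exp 1 + (exp 1)\<^sup>2 * ?s * x) \<le> eps * ((exp 1)\<^sup>2 * (real r + 1))"
    using assms(1) by (rule mult_left_mono)
  then show ?thesis
    using assms(2) by (intro mult_right_mono) (simp_all add: mult.assoc)
qed

theorem theorem4:
  fixes eps :: real and d r :: nat and n m :: "nat \<Rightarrow> nat"
    and \<alpha> :: "nat \<Rightarrow> complex" and y :: "nat \<Rightarrow> nat \<Rightarrow> nat \<Rightarrow> complex"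
    and A :: "nat \<Rightarrow> nat \<Rightarrow> nat \<Rightarrow> complex"
  assumes eps_pos: "0 < eps" and eps_le: "eps \<le> 3/4"
    and d_pos: "1 \<le> d"
    and std: "\<And>l k. l < d \<Longrightarrow> k < r \<Longrightarrow> vnorm2 (n l) (y l k) = 1"
    and JL: "\<And>j. j < d \<Longrightarrow> JL_embedding (eps / (4 * real d)) (m j) (n j) (A j) (S_prime r y j)"
  shows "\<bar>tnorm2 d n (cp_tensor d r \<alpha> y)
            - tnorm2 d m (multi_mode_prod d n A (cp_tensor d r \<alpha> y))\<bar>
          \<le> eps * (exp 1 + (exp 1)\<^sup>2 * sqrt (real r * (real r - 1))
                     * max (eps ^ (d - 1)) (coherence d n r y ^ (d - 1)))
              * (\<Sum>k<r. (cmod (\<alpha> k))\<^sup>2)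
       \<and> eps * (exp 1 + (exp 1)\<^sup>2 * sqrt (real r * (real r - 1))
                     * max (eps ^ (d - 1)) (coherence d n r y ^ (d - 1)))
              * (\<Sum>k<r. (cmod (\<alpha> k))\<^sup>2)
          \<le> eps * (exp 1)\<^sup>2 * (real r + 1) * (\<Sum>k<r. (cmod (\<alpha> k))\<^sup>2)
       \<and> (coherence d n r y = 0 \<longrightarrow>
            \<bar>tnorm2 d n (cp_tensor d r \<alpha> y)
              - tnorm2 d m (multi_mode_prod d n A (cp_tensor d r \<alpha> y))\<bar>
            \<le> (eps + exp 1 * sqrt (real r * (real r - 1)) * eps ^ d) * exp 1
                 * (\<Sum>k<r. (cmod (\<alpha> k))\<^sup>2))"
proof -
  let ?D = "\<bar>tnorm2 d n (cp_tensor d r \<alpha> y) - tnorm2 d m (multi_mode_prod d n A (cp_tensor d r \<alpha> y))\<bar>"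
  let ?S = "\<Sum>k<r. (cmod (\<alpha> k))\<^sup>2"
  let ?s = "sqrt (real r * (real r - 1))"
  let ?\<mu> = "coherence d n r y"
  let ?M = "max (eps ^ (d - 1)) (?\<mu> ^ (d - 1))"
  have "0 \<le> ?\<mu>" "?\<mu> \<le> 1"
    using coherence_nonneg coherence_le_one std by auto
  have "?D \<le> (eps * exp 1 + ?s * (eps * (exp 1)\<^sup>2 * ?M)) * ?S"
    using eps_pos eps_le d_pos \<open>0 \<le> ?\<mu>\<close>
    by (intro tnorm2_multi_mode_prod_diff_le_exp[where M = "max eps ?\<mu>"] off_diagonal_error_le std JL)
      auto
  moreover have "?D \<le> (eps * exp 1 + ?s * ((exp 1)\<^sup>2 * eps ^ d)) * ?S" if "?\<mu> = 0"
    using eps_pos eps_le d_pos that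
    by (intro tnorm2_multi_mode_prod_diff_le_exp[where M = 0] orthogonal_off_diagonal_error_le std JL)
      auto
  moreover have "eps * (exp 1 + (exp 1)\<^sup>2 * ?s * ?M) * ?S \<le> eps * (exp 1)\<^sup>2 * (real r + 1) * ?S"
    using eps_pos eps_le \<open>0 \<le> ?\<mu>\<close> \<open>?\<mu> \<le> 1\<close>
    by (intro coherence_bound_le_rank_bound) (auto simp: sum_nonneg le_max_iff_disj power_le_one)
  ultimately show ?thesis
    by (simp add: algebra_simps power2_eq_square)
qed

end
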